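(* Let $G=(V,E,\omega)\in\mathbb{G}_\pi$. Then for any nonempty $\mathcal{V}\subseteq V$, every sequence of reductions on $G$ with final vertex set $\mathcal{V}$ reduces $G$ to one and the same graph $\mathcal{R}_{\mathcal{V}}[G]=(\mathcal{V},\mathcal{E},\mu)$. Moreover, at least one such sequence of reductions always exists.
   Context: Let $\mathbb{W}$ be the field of rational functions $p(\lambda)/q(\lambda)$ in a complex variable $\lambda$, $p,q\in\mathbb{C}[\lambda]$, $q\neq0$; for $w=p/q$ put $\pi(w)=\deg p-\deg q$ (the zero function counts as $\pi\le0$). A graph $G=(V,E,\omega)$ is a finite directed graph, vertex set $V=\{v_1,\dots,v_n\}$, edges $E$ (loops allowed, at most one edge $e_{ij}$ from $v_i$ to $v_j$), weights $\omega:E\to\mathbb{W}\setminus\{0\}$, $\omega(e_{ij})=0$ if no such edge, $M(G)_{ij}=\omega(e_{ij})$. $\mathbb{G}_\pi$ is the set of graphs with $\pi(M(G)_{ij})\le0$ for all entries. $\bar S=V\setminus S$; $\ell(G)$ is $G$ without loops; $G|_U$ is an induced subgraph. A path is a sequence of distinct vertices $u_1,\dots,u_m$ ($m\ge2$) with edges $u_k\to u_{k+1}$; a cycle is the same with $u_1=u_m$, $u_1,\dots,u_{m-1}$ distinct; $u_2,\dots,u_{m-1}$ are interior. A nonempty $S\subseteq V$ is a structural set ($S\in st(G)$) if $\ell(G)|_{\bar S}$ has no cycles and $\omega(e_{ii})\ne\lambda$ for all $v_i\in\bar S$. For $v_i,v_j\in S$, $\mathcal{B}_{ij}(G;S)$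 is the set of paths or cycles from $v_i$ to $v_j$ with no interior vertex in $S$; $\mathcal{P}_\omega(u_1,\dots,u_m)=\omega(u_1u_2)\prod_{k=2}^{m-1}\frac{\omega(u_ku_{k+1})}{\lambda-\omega(u_ku_k)}$. The reduction $\mathcal{R}_S(G)$ has vertex set $S$, an edge $v_i\to v_j$ iff $\mathcal{B}_{ij}(G;S)\ne\emptyset$, of weight $\sum_{\beta\in\mathcal{B}_{ij}(G;S)}\mathcal{P}_\omega(\beta)$. Sets $S_m\subseteq\dots\subseteq S_1\subseteq V$ induce a sequence of reductions on $G$ with final vertex set $S_m$ if $S_1\in st(G)$ and, with $\mathcal{R}_1(G)=\mathcal{R}_{S_1}(G)$, $S_{i+1}\in st(\mathcal{R}_i(G))$ and $\mathcal{R}_{i+1}(G)=\mathcal{R}_{S_{i+1}}(\mathcal{R}_i(G))$ for $1\le i\le m-1$; the result is $\mathcal{R}_m(G)$. *)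

theory Defs
  imports "HOL-Computational_Algebra.Polynomial" "HOL-Computational_Algebra.Fraction_Field"
begin

type_synonym W = "complex poly fract"

definition lam :: W where "lam = Fract [:0, 1:] 1"

text \<open>pi(p/q) = deg p - deg q (well defined for nonzero w); the zero function gets 0,
  so that it counts as pi <= 0.\<close>
definition pi_deg :: "W \<Rightarrow> int" where
  "pi_deg w = (if w = 0 then 0 else
     (THE d. \<exists>p q. q \<noteq> 0 \<and> w = Fract p q \<and> d = int (degree p) - int (degree q)))"

text \<open>A graph: a finite vertex set and a weight matrix; an edge i -> j exists iff
  the weight is nonzero (weights vanish outside the vertex set).\<close>
type_synonym 'v graph = "'v set \<times> ('v \<Rightarrow> 'v \<Rightarrow> W)"

definition verts :: "'v graph \<Rightarrow> 'v set" where "verts G = fst G"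
definition wt :: "'v graph \<Rightarrow> 'v \<Rightarrow> 'v \<Rightarrow> W" where "wt G = snd G"

definition wf_graph :: "'v graph \<Rightarrow> bool" where
  "wf_graph G \<longleftrightarrow> finite (verts G) \<and>
     (\<forall>i j. wt G i j \<noteq> 0 \<longrightarrow> i \<in> verts G \<and> j \<in> verts G)"

definition in_G_pi :: "'v graph \<Rightarrow> bool" where
  "in_G_pi G \<longleftrightarrow> (\<forall>i \<in> verts G. \<forall>j \<in> verts G. pi_deg (wt G i j) \<le> 0)"

definition loopless :: "'v graph \<Rightarrow> 'v graph" where
  "loopless G = (verts G, \<lambda>i j. if i = j then 0 else wt G i j)"

definition induced :: "'v graph \<Rightarrow> 'v set \<Rightarrow> 'v graph" where
  "induced G U = (verts G \<inter> U, \<lambda>i j. if i \<in> U \<and> j \<in> U then wt G i j else 0)"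

definition edges_along :: "'v graph \<Rightarrow> 'v list \<Rightarrow> bool" where
  "edges_along G xs \<longleftrightarrow> set xs \<subseteq> verts G \<and>
     (\<forall>k. Suc k < length xs \<longrightarrow> wt G (xs ! k) (xs ! Suc k) \<noteq> 0)"

definition is_path :: "'v graph \<Rightarrow> 'v list \<Rightarrow> bool" where
  "is_path G xs \<longleftrightarrow> length xs \<ge> 2 \<and> distinct xs \<and> edges_along G xs"

definition is_cycle :: "'v graph \<Rightarrow> 'v list \<Rightarrow> bool" where
  "is_cycle G xs \<longleftrightarrow> length xs \<ge> 2 \<and> hd xs = last xs \<and> distinct (butlast xs)
     \<and> edges_along G xs"

definition interior :: "'v list \<Rightarrow> 'v set" where
  "interior xs = set (butlast (tl xs))"

definition structural_set :: "'v graph \<Rightarrow> 'v set \<Rightarrow> bool" where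
  "structural_set G S \<longleftrightarrow> S \<noteq> {} \<and> S \<subseteq> verts G \<and>
     \<not> (\<exists>xs. is_cycle (induced (loopless G) (verts G - S)) xs) \<and>
     (\<forall>i \<in> verts G - S. wt G i i \<noteq> lam)"

definition branches :: "'v graph \<Rightarrow> 'v set \<Rightarrow> 'v \<Rightarrow> 'v \<Rightarrow> 'v list set" where
  "branches G S i j = {xs. (is_path G xs \<or> is_cycle G xs) \<and> hd xs = i \<and> last xs = j
       \<and> interior xs \<inter> S = {}}"

definition path_weight :: "'v graph \<Rightarrow> 'v list \<Rightarrow> W" where
  "path_weight G xs = wt G (xs ! 0) (xs ! 1) *
     (\<Prod>k \<in> {1..<length xs - 1}.
        wt G (xs ! k) (xs ! Suc k) / (lam - wt G (xs ! k) (xs ! k)))"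

definition reduce :: "'v set \<Rightarrow> 'v graph \<Rightarrow> 'v graph" where
  "reduce S G = (S, \<lambda>i j. if i \<in> S \<and> j \<in> S
       then (\<Sum>xs \<in> branches G S i j. path_weight G xs) else 0)"

fun red_seq :: "'v graph \<Rightarrow> 'v set list \<Rightarrow> 'v graph option" where
  "red_seq G [] = Some G"
| "red_seq G (S # Ss) = (if structural_set G S then red_seq (reduce S G) Ss else None)"

definition is_red_seq :: "'v graph \<Rightarrow> 'v set list \<Rightarrow> 'v set \<Rightarrow> bool" where
  "is_red_seq G Ss U \<longleftrightarrow> Ss \<noteq> [] \<and> last Ss = U \<and>
     (\<forall>k. Suc k < length Ss \<longrightarrow> Ss ! Suc k \<subseteq> Ss ! k) \<and> red_seq G Ss \<noteq> None"

end

theory Submission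
  imports Defs
begin

text \<open>Reduction is a Schur complement: if \<open>\<lambda>I - M(G)\<close> is written in block form over
  \<open>S\<close> and \<open>V - S\<close>, then \<open>\<lambda>I - M(\<R>\<^sub>S(G))\<close> is the Schur complement of the
  \<open>V - S\<close> block, the branch sums being the Neumann-type expansion of the inverse of that block,
  which terminates because \<open>V - S\<close> carries no cycles. A Schur complement of a Schur complement is
  again a Schur complement, and a Schur complement over a given vertex set is unique, so every
  sequence of reductions ending in \<open>\<V>\<close> yields the same graph. For existence, vertices outside
  \<open>\<V>\<close> are removed one at a time: a single vertex carries no cycle, and in \<open>\<G>\<^sub>\<pi>\<close> its loop
  weight has \<open>\<pi> \<le> 0\<close> and so differs from \<open>\<lambda>\<close>; reductions preserve \<open>\<G>\<^sub>\<pi>\<close>.\<close>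

lemma verts_induced [simp]: "verts (induced H U) = verts H \<inter> U"
  by (simp add: induced_def verts_def)

lemma wt_induced [simp]: "wt (induced H U) i j = (if i \<in> U \<and> j \<in> U then wt H i j else 0)"
  by (simp add: induced_def wt_def)

lemma verts_loopless [simp]: "verts (loopless H) = verts H"
  by (simp add: loopless_def verts_def)

lemma wt_loopless [simp]: "wt (loopless H) i j = (if i = j then 0 else wt H i j)"
  by (simp add: loopless_def wt_def)

lemma verts_reduce [simp]: "verts (reduce S G) = S"
  by (simp add: reduce_def verts_def)

lemma wt_reduce:
  "wt (reduce S G) i j =
     (if i \<in> S \<and> j \<in> S then \<Sum>xs \<in> branches G S i j. path_weight G xs else 0)"
  by (simp add: reduce_def wt_def)

lemma graph_eqI: "verts H1 = verts H2 \<Longrightarrow> wt H1 = wt H2 \<Longrightarrow> H1 = H2"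
  unfolding verts_def wt_def by (simp add: prod_eq_iff)

lemma wf_graph_reduce: "finite S \<Longrightarrow> wf_graph (reduce S G)"
  unfolding wf_graph_def by (auto simp: wt_reduce split: if_splits)

lemma structural_set_subset: "structural_set G S \<Longrightarrow> S \<subseteq> verts G"
  unfolding structural_set_def by blast

subsection \<open>Proper rational functions\<close>

definition proper :: "W \<Rightarrow> bool" where
  "proper w \<longleftrightarrow> (\<exists>p q. q \<noteq> 0 \<and> w = Fract p q \<and> degree p \<le> degree q)"

lemma proper_0: "proper 0"
  unfolding proper_def by (rule exI[of _ 0], rule exI[of _ 1]) (simp add: Zero_fract_def)

lemma proper_1: "proper 1"
  unfolding proper_def by (rule exI[of _ 1], rule exI[of _ 1]) (simp add: One_fract_def)

lemma proper_add:
  assumes "proper a" "proper b" shows "proper (a + b)"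
proof -
  obtain p q r s where a: "q \<noteq> 0" "a = Fract p q" "degree p \<le> degree q"
    and b: "s \<noteq> 0" "b = Fract r s" "degree r \<le> degree s"
    using assms unfolding proper_def by blast
  have "degree (p * s + r * q) \<le> degree (q * s)"
  proof -
    have "degree (p * s) \<le> degree q + degree s" "degree (r * q) \<le> degree q + degree s"
      using degree_mult_le[of p s] degree_mult_le[of r q] a b by linarith+
    moreover have "degree (q * s) = degree q + degree s"
      using a b by (simp add: degree_mult_eq)
    ultimately show ?thesis
      by (metis degree_add_le)
  qed
  moreover have "a + b = Fract (p * s + r * q) (q * s)" "q * s \<noteq> 0"
    using a b by simp_all
  ultimately show ?thesis unfolding proper_def by blast
qed

lemma proper_mult:
  assumes "proper a" "proper b" shows "proper (a * b)"
proof -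
  obtain p q r s where a: "q \<noteq> 0" "a = Fract p q" "degree p \<le> degree q"
    and b: "s \<noteq> 0" "b = Fract r s" "degree r \<le> degree s"
    using assms unfolding proper_def by blast
  have "degree (p * r) \<le> degree (q * s)"
    using degree_mult_le[of p r] a b by (simp add: degree_mult_eq)
  moreover have "a * b = Fract (p * r) (q * s)" "q * s \<noteq> 0"
    using a b by simp_all
  ultimately show ?thesis unfolding proper_def by blast
qed

lemma proper_sum: "(\<And>x. x \<in> A \<Longrightarrow> proper (f x)) \<Longrightarrow> proper (sum f A)"
  by (induction A rule: infinite_finite_induct) (auto simp: proper_0 proper_add)

lemma proper_prod: "(\<And>x. x \<in> A \<Longrightarrow> proper (f x)) \<Longrightarrow> proper (prod f A)"
  by (induction A rule: infinite_finite_induct) (auto simp: proper_1 proper_mult)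

lemma lam_minus_proper_Fract:
  assumes "proper b"
  obtains r q where "q \<noteq> 0" "r \<noteq> 0" "lam - b = Fract r q" "degree r = degree q + 1"
proof -
  obtain p q where b: "q \<noteq> 0" "b = Fract p q" "degree p \<le> degree q"
    using assms unfolding proper_def by blast
  have "degree ([:0, 1:] * q) = degree q + 1"
    using b by (simp add: degree_mult_eq)
  then have deg: "degree ([:0, 1:] * q - p) = degree q + 1"
    using degree_add_eq_left[of "-p" "[:0, 1:] * q"] b by simp
  have "lam - b = Fract ([:0, 1:] * q - p) q"
    using b by (simp add: lam_def)
  moreover have "[:0, 1:] * q - p \<noteq> 0"
    using deg by auto
  ultimately show ?thesis
    using that b(1) deg by blast
qed

lemma proper_divide_lam_minus:
  assumes "proper a" "proper b" shows "proper (a / (lam - b))"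
proof -
  obtain r q where rq: "q \<noteq> 0" "r \<noteq> 0" "lam - b = Fract r q" "degree r = degree q + 1"
    using lam_minus_proper_Fract[OF assms(2)] by blast
  obtain p s where a: "s \<noteq> 0" "a = Fract p s" "degree p \<le> degree s"
    using assms(1) unfolding proper_def by blast
  have "a / (lam - b) = Fract (p * q) (s * r)" "s * r \<noteq> 0"
    using a rq by (simp_all add: divide_inverse)
  moreover have "degree (p * q) \<le> degree (s * r)"
    using degree_mult_le[of p q] a rq by (simp add: degree_mult_eq)
  ultimately show ?thesis unfolding proper_def by blast
qed

lemma proper_neq_lam:
  assumes "proper b" shows "b \<noteq> lam"
proof -
  obtain r q where "q \<noteq> 0" "r \<noteq> 0" "lam - b = Fract r q"
    using lam_minus_proper_Fract[OF assms] by blast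
  then have "lam - b \<noteq> 0"
    by (simp add: Zero_fract_def eq_fract)
  then show ?thesis by auto
qed

lemma pi_deg_Fract:
  assumes "q \<noteq> 0" "w = Fract p q" "w \<noteq> 0"
  shows "pi_deg w = int (degree p) - int (degree q)"
proof -
  have p0: "p \<noteq> 0"
    using assms by (auto simp: Zero_fract_def eq_fract)
  have "d = int (degree p) - int (degree q)"
    if "q' \<noteq> 0" "w = Fract p' q'" "d = int (degree p') - int (degree q')" for d p' q'
  proof -
    have e: "p * q' = p' * q"
      using that assms by (simp add: eq_fract)
    then have "p' \<noteq> 0"
      using p0 that assms by auto
    then have "degree p + degree q' = degree p' + degree q"
      using arg_cong[OF e, of degree] p0 that assms by (simp add: degree_mult_eq)
    then show ?thesis
      using that by linarith
  qed
  then show ?thesis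
    unfolding pi_deg_def using assms(3)
    by (simp, intro the_equality) (use assms in blast)+
qed

lemma pi_deg_le_0_iff_proper: "pi_deg w \<le> 0 \<longleftrightarrow> proper w"
proof (cases "w = 0")
  case True
  then show ?thesis by (simp add: pi_deg_def proper_0)
next
  case False
  obtain p q where pq: "w = Fract p q" "q \<noteq> 0" by (cases w) auto
  show ?thesis
  proof
    assume "pi_deg w \<le> 0"
    then show "proper w"
      using pi_deg_Fract pq False unfolding proper_def by fastforce
  next
    assume "proper w"
    then show "pi_deg w \<le> 0"
      unfolding proper_def using pi_deg_Fract False by fastforce
  qed
qed

lemma proper_wt: "in_G_pi G \<Longrightarrow> a \<in> verts G \<Longrightarrow> b \<in> verts G \<Longrightarrow> proper (wt G a b)"
  unfolding in_G_pi_def using pi_deg_le_0_iff_proper by blast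

subsection \<open>Schur complements of \<open>\<lambda>I - M\<close>\<close>

definition char_mult :: "'v graph \<Rightarrow> ('v \<Rightarrow> W) \<Rightarrow> 'v \<Rightarrow> W" where
  "char_mult G x k = lam * x k - (\<Sum>l\<in>verts G. wt G k l * x l)"

definition nonsingular_off :: "'v graph \<Rightarrow> 'v set \<Rightarrow> bool" where
  "nonsingular_off G U \<longleftrightarrow>
     (\<forall>x. (\<forall>u\<in>U. x u = 0) \<longrightarrow> (\<forall>k\<in>verts G - U. char_mult G x k = 0) \<longrightarrow>
          (\<forall>k\<in>verts G - U. x k = 0))"

definition unit_extension :: "'v graph \<Rightarrow> 'v set \<Rightarrow> 'v \<Rightarrow> ('v \<Rightarrow> W) \<Rightarrow> bool" where
  "unit_extension G U j g \<longleftrightarrow>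
     (\<forall>u\<in>U. g u = (if u = j then 1 else 0)) \<and> (\<forall>k\<in>verts G - U. char_mult G g k = 0)"

text \<open>Writing \<open>\<lambda>I - M(G) = [[A, B], [C, D]]\<close> in blocks over \<open>U\<close> and \<open>V - U\<close>, the unit
  extension of \<open>e\<^sub>j\<close> is \<open>(e\<^sub>j, -D\<^sup>-\<^sup>1 C e\<^sub>j)\<close>, and \<open>char_mult\<close> of it restricted to
  \<open>U\<close> is column \<open>j\<close> of \<open>A - B D\<^sup>-\<^sup>1 C\<close>. So the last clause says
  \<open>\<lambda>I - M(H) = A - B D\<^sup>-\<^sup>1 C\<close>.\<close>

definition schur_complement :: "'v graph \<Rightarrow> 'v set \<Rightarrow> 'v graph \<Rightarrow> bool" where
  "schur_complement G U H \<longleftrightarrow>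
     verts H = U \<and> U \<subseteq> verts G \<and> finite (verts G) \<and>
     (\<forall>i j. i \<notin> U \<or> j \<notin> U \<longrightarrow> wt H i j = 0) \<and> nonsingular_off G U \<and>
     (\<forall>j\<in>U. \<exists>g. unit_extension G U j g \<and>
        (\<forall>i\<in>U. wt H i j = (if i = j then lam else 0) - char_mult G g i))"

lemma char_mult_cong:
  "(\<And>v. v \<in> verts G \<Longrightarrow> x v = y v) \<Longrightarrow> k \<in> verts G \<Longrightarrow> char_mult G x k = char_mult G y k"
  unfolding char_mult_def by simp

lemma char_mult_diff: "char_mult G (\<lambda>v. x v - y v) k = char_mult G x k - char_mult G y k"
  unfolding char_mult_def by (simp add: algebra_simps sum_subtractf)

lemma char_mult_sum:
  "char_mult G (\<lambda>v. \<Sum>s\<in>I. c s * f s v) k = (\<Sum>s\<in>I. c s * char_mult G (f s) k)"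
proof -
  have "(\<Sum>l\<in>verts G. wt G k l * (\<Sum>s\<in>I. c s * f s l)) =
        (\<Sum>s\<in>I. c s * (\<Sum>l\<in>verts G. wt G k l * f s l))"
    by (simp add: sum_distrib_left algebra_simps) (rule sum.swap)
  then show ?thesis
    unfolding char_mult_def by (simp add: sum_distrib_left algebra_simps sum_subtractf)
qed

lemma nonsingular_offD:
  "nonsingular_off G U \<Longrightarrow> \<forall>u\<in>U. x u = 0 \<Longrightarrow> \<forall>k\<in>verts G - U. char_mult G x k = 0 \<Longrightarrow>
   k \<in> verts G - U \<Longrightarrow> x k = 0"
  unfolding nonsingular_off_def by blast

lemma unit_extension_unique:
  assumes "nonsingular_off G U" "unit_extension G U j g1" "unit_extension G U j g2"
    and "v \<in> verts G"
  shows "g1 v = g2 v"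
proof (cases "v \<in> U")
  case True
  then show ?thesis using assms(2,3) unfolding unit_extension_def by simp
next
  case False
  have "\<forall>u\<in>U. g1 u - g2 u = 0" "\<forall>k\<in>verts G - U. char_mult G (\<lambda>v. g1 v - g2 v) k = 0"
    using assms(2,3) unfolding unit_extension_def by (simp_all add: char_mult_diff)
  from nonsingular_offD[OF assms(1) this] False assms(4) show ?thesis by simp
qed

lemma schur_complement_unique:
  assumes H1: "schur_complement G U H1" and H2: "schur_complement G U H2"
  shows "H1 = H2"
proof (rule graph_eqI)
  show "verts H1 = verts H2"
    using H1 H2 unfolding schur_complement_def by simp
  show "wt H1 = wt H2"
  proof (intro ext)
    fix i j
    show "wt H1 i j = wt H2 i j"
    proof (cases "i \<in> U \<and> j \<in> U")
      case False
      then show ?thesis using H1 H2 unfolding schur_complement_def by simp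
    next
      case True
      obtain g1 where g1: "unit_extension G U j g1"
        "wt H1 i j = (if i = j then lam else 0) - char_mult G g1 i"
        using H1 True unfolding schur_complement_def by blast
      obtain g2 where g2: "unit_extension G U j g2"
        "wt H2 i j = (if i = j then lam else 0) - char_mult G g2 i"
        using H2 True unfolding schur_complement_def by blast
      have "char_mult G g1 i = char_mult G g2 i"
        using H1 True unit_extension_unique[OF _ g1(1) g2(1)]
        unfolding schur_complement_def by (intro char_mult_cong) auto
      then show ?thesis using g1 g2 by simp
    qed
  qed
qed

text \<open>The lifting is \<open>L h = (\<Sum>s\<in>U. h s \<cdot> g\<^sub>s)\<close>, with \<open>g\<^sub>s\<close> the unit extension of \<open>e\<^sub>s\<close>.\<close>

lemma schur_complement_lifting:
  assumes H: "schur_complement G U H"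
  obtains L where "\<And>h u. u \<in> U \<Longrightarrow> L h u = h u"
    and "\<And>h k. k \<in> verts G \<Longrightarrow> char_mult G (L h) k = (if k \<in> U then char_mult H h k else 0)"
proof -
  have UV: "U \<subseteq> verts G" and vH: "verts H = U" and finU: "finite U"
    using H finite_subset unfolding schur_complement_def by blast+
  obtain gs where gs: "\<And>s. s \<in> U \<Longrightarrow> unit_extension G U s (gs s) \<and>
      (\<forall>i\<in>U. wt H i s = (if i = s then lam else 0) - char_mult G (gs s) i)"
    using H unfolding schur_complement_def by metis
  define L where "L h v = (\<Sum>s\<in>U. h s * gs s v)" for h v
  show thesis
  proof (rule that)
    fix h u assume u: "u \<in> U"
    have "L h u = (\<Sum>s\<in>U. if s = u then h s else 0)"
      unfolding L_def using gs u by (intro sum.cong) (auto simp: unit_extension_def)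
    then show "L h u = h u" using u finU by simp
  next
    fix h k assume k: "k \<in> verts G"
    have "char_mult G (L h) k = (\<Sum>s\<in>U. h s * char_mult G (gs s) k)"
      unfolding L_def by (rule char_mult_sum)
    also have "\<dots> = (if k \<in> U then char_mult H h k else 0)"
    proof (cases "k \<in> U")
      case True
      have gs_char: "char_mult G (gs s) k = (if k = s then lam else 0) - wt H k s"
        if "s \<in> U" for s
        using gs[OF that] True by simp
      have "(\<Sum>s\<in>U. h s * char_mult G (gs s) k) =
            (\<Sum>s\<in>U. (if s = k then lam * h s else 0) - wt H k s * h s)"
        by (intro sum.cong refl) (simp add: gs_char right_diff_distrib mult.commute)
      also have "\<dots> = char_mult H h k"
        using True finU vH by (simp add: sum_subtractf char_mult_def)
      finally show ?thesis using True by simp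
    next
      case False
      then show ?thesis using gs k by (simp add: unit_extension_def)
    qed
    finally show "char_mult G (L h) k = (if k \<in> U then char_mult H h k else 0)" .
  qed
qed

lemma nonsingular_off_trans:
  assumes H: "schur_complement G S H" and sing_H: "nonsingular_off H U" and US: "U \<subseteq> S"
  shows "nonsingular_off G U"
  unfolding nonsingular_off_def
proof (intro allI impI)
  fix x assume xU: "\<forall>u\<in>U. x u = 0" and xc: "\<forall>k\<in>verts G - U. char_mult G x k = 0"
  have SV: "S \<subseteq> verts G" and vH: "verts H = S" and sing_G: "nonsingular_off G S"
    using H unfolding schur_complement_def by auto
  obtain L where L_on: "\<And>h u. u \<in> S \<Longrightarrow> L h u = h u"
    and L_char: "\<And>h k. k \<in> verts G \<Longrightarrow>
                   char_mult G (L h) k = (if k \<in> S then char_mult H h k else 0)"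
    using schur_complement_lifting[OF H] by blast
  have on_S: "\<forall>u\<in>S. x u - L x u = 0"
    using L_on by simp
  have off_S: "\<forall>k\<in>verts G - S. char_mult G (\<lambda>v. x v - L x v) k = 0"
    using xc US L_char by (auto simp: char_mult_diff)
  have "x v - L x v = 0" if "v \<in> verts G - S" for v
    using nonsingular_offD[OF sing_G on_S off_S that] by simp
  then have xL: "x v = L x v" if "v \<in> verts G" for v
    using that L_on by (cases "v \<in> S") auto
  have "\<forall>k\<in>S - U. char_mult H x k = 0"
  proof
    fix k assume k: "k \<in> S - U"
    then have "char_mult H x k = char_mult G (L x) k" using L_char SV by auto
    also have "\<dots> = char_mult G x k" using xL k SV by (intro char_mult_cong) auto
    finally show "char_mult H x k = 0" using xc k SV by auto
  qed
  then have "\<forall>s\<in>S. x s = 0"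
    using xU nonsingular_offD[OF sing_H xU] vH by auto
  moreover have "\<forall>k\<in>verts G - S. char_mult G x k = 0"
    using xc US by blast
  ultimately show "\<forall>k\<in>verts G - U. x k = 0"
    using nonsingular_offD[OF sing_G] by blast
qed

lemma schur_complement_trans:
  assumes H1: "schur_complement G S H1" and H2: "schur_complement H1 U H2"
  shows "schur_complement G U H2"
proof -
  have SV: "S \<subseteq> verts G" and vH1: "verts H1 = S" and US: "U \<subseteq> S"
    using H1 H2 unfolding schur_complement_def by auto
  obtain L where L_on: "\<And>h u. u \<in> S \<Longrightarrow> L h u = h u"
    and L_char: "\<And>h k. k \<in> verts G \<Longrightarrow>
                   char_mult G (L h) k = (if k \<in> S then char_mult H1 h k else 0)"
    using schur_complement_lifting[OF H1] by blast
  have "\<exists>g. unit_extension G U j g \<and>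
      (\<forall>i\<in>U. wt H2 i j = (if i = j then lam else 0) - char_mult G g i)" if j: "j \<in> U" for j
  proof -
    obtain h where h: "unit_extension H1 U j h"
      "\<forall>i\<in>U. wt H2 i j = (if i = j then lam else 0) - char_mult H1 h i"
      using H2 j unfolding schur_complement_def by blast
    have "unit_extension G U j (L h)"
      using h(1) US L_on L_char vH1 unfolding unit_extension_def by auto
    moreover have "char_mult G (L h) i = char_mult H1 h i" if "i \<in> U" for i
      using that US SV L_char[of i h] by (simp add: subset_iff)
    ultimately show ?thesis using h(2) by auto
  qed
  moreover have "nonsingular_off G U"
    using H2 nonsingular_off_trans[OF H1 _ US] unfolding schur_complement_def by blast
  ultimately show ?thesis
    using H1 H2 unfolding schur_complement_def by auto
qed

subsection \<open>Structural sets and nonsingularity\<close>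

lemma funpow_first_repetition:
  assumes fin: "finite N" and aN: "a \<in> N" and f: "\<And>k. k \<in> N \<Longrightarrow> f k \<in> N"
  obtains i j where "i < j" "(f ^^ i) a = (f ^^ j) a" "inj_on (\<lambda>m. (f ^^ m) a) {0..<j}"
proof -
  define s where "s m = (f ^^ m) a" for m
  have sN: "s m \<in> N" for m
    by (induction m) (use aN f in \<open>auto simp: s_def\<close>)
  have "\<not> inj_on s {0..card N}"
  proof
    assume "inj_on s {0..card N}"
    then have "card (s ` {0..card N}) = card N + 1"
      by (simp add: card_image)
    moreover have "card (s ` {0..card N}) \<le> card N"
      using sN fin by (intro card_mono) auto
    ultimately show False by simp
  qed
  then have ex: "\<exists>j. \<exists>i<j. s i = s j"
    unfolding inj_on_def by (metis linorder_neqE_nat)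
  define j0 where "j0 = (LEAST j. \<exists>i<j. s i = s j)"
  obtain i0 where "i0 < j0" "s i0 = s j0"
    using LeastI_ex[OF ex] unfolding j0_def by blast
  moreover have "inj_on s {0..<j0}"
  proof (rule inj_onI)
    fix x y assume xy: "x \<in> {0..<j0}" "y \<in> {0..<j0}" "s x = s y"
    show "x = y"
    proof (rule ccontr)
      assume "x \<noteq> y"
      then have "\<exists>i<max x y. s i = s (max x y)"
        using xy(3) by (metis linorder_neqE_nat max.strict_order_iff max_def)
      then have "j0 \<le> max x y"
        unfolding j0_def by (rule Least_le)
      then show False using xy by auto
    qed
  qed
  ultimately show thesis
    using that unfolding s_def by blast
qed

lemma finite_successor_cycle:
  assumes fin: "finite N" and aN: "a \<in> N" and f: "\<And>k. k \<in> N \<Longrightarrow> f k \<in> N \<and> R k (f k)"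
  obtains c where "length c \<ge> 2" "hd c = last c" "distinct (butlast c)" "set c \<subseteq> N"
    "\<And>m. Suc m < length c \<Longrightarrow> R (c ! m) (c ! Suc m)"
proof -
  obtain i0 j0 where ij: "i0 < j0" "(f ^^ i0) a = (f ^^ j0) a"
    and inj: "inj_on (\<lambda>m. (f ^^ m) a) {0..<j0}"
    using funpow_first_repetition[OF fin aN] f by metis
  have sN: "(f ^^ m) a \<in> N" for m
    by (induction m) (use aN f in auto)
  define c where "c = map (\<lambda>m. (f ^^ m) a) [i0..<Suc j0]"
  show thesis
  proof (rule that)
    show "2 \<le> length c" "hd c = last c" "set c \<subseteq> N"
      using ij sN by (auto simp: c_def hd_map last_map)
    have "butlast c = map (\<lambda>m. (f ^^ m) a) [i0..<j0]"
      by (simp add: c_def map_butlast[symmetric])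
    then show "distinct (butlast c)"
      using inj by (simp add: distinct_map inj_on_subset)
    fix m assume m: "Suc m < length c"
    then have "c ! Suc m = f (c ! m)" "c ! m \<in> N"
      using sN by (simp_all add: c_def del: upt_Suc)
    then show "R (c ! m) (c ! Suc m)"
      using f by metis
  qed
qed

lemma structural_set_no_cycle_outside:
  assumes "structural_set G S" "set c \<subseteq> verts G - S" "length c \<ge> 2" "hd c = last c"
    "distinct (butlast c)"
    "\<And>m. Suc m < length c \<Longrightarrow> c ! m \<noteq> c ! Suc m \<and> wt G (c ! m) (c ! Suc m) \<noteq> 0"
  shows False
proof -
  have "is_cycle (induced (loopless G) (verts G - S)) c"
    unfolding is_cycle_def edges_along_def
  proof (intro conjI allI impI)
    fix k assume k: "Suc k < length c"
    then have "c ! k \<in> verts G - S" "c ! Suc k \<in> verts G - S"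
      using assms(2) nth_mem by (meson Suc_lessD subsetD)+
    then show "wt (induced (loopless G) (verts G - S)) (c ! k) (c ! Suc k) \<noteq> 0"
      using assms(6)[OF k] by auto
  qed (use assms in auto)
  then show False
    using assms(1) unfolding structural_set_def by blast
qed

text \<open>In a nonzero kernel vector of the \<open>V - S\<close> block of \<open>\<lambda>I - M\<close>, each vertex \<open>k\<close> of
  the support needs an edge \<open>k \<rightarrow> l \<noteq> k\<close> into the support, since \<open>\<omega>(e\<^sub>k\<^sub>k) \<noteq> \<lambda>\<close>;
  following these edges closes a cycle outside \<open>S\<close>.\<close>

lemma structural_set_nonsingular_off:
  assumes wf: "wf_graph G" and st: "structural_set G S"
  shows "nonsingular_off G S"
  unfolding nonsingular_off_def
proof (intro allI impI ballI, rule ccontr)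
  fix x a
  assume x0: "\<forall>u\<in>S. x u = 0" and xc: "\<forall>k\<in>verts G - S. char_mult G x k = 0"
    and a: "a \<in> verts G - S" "x a \<noteq> 0"
  define N where "N = {k \<in> verts G - S. x k \<noteq> 0}"
  have finV: "finite (verts G)"
    using wf unfolding wf_graph_def by blast
  have succ: "\<exists>l\<in>N. k \<noteq> l \<and> wt G k l \<noteq> 0" if k: "k \<in> N" for k
  proof (rule ccontr)
    assume no_succ: "\<not> ?thesis"
    have kV: "k \<in> verts G" "k \<notin> S" "x k \<noteq> 0"
      using k unfolding N_def by auto
    have "(\<Sum>l\<in>verts G - {k}. wt G k l * x l) = 0"
      using x0 no_succ unfolding N_def by (intro sum.neutral) auto
    then have "(\<Sum>l\<in>verts G. wt G k l * x l) = wt G k k * x k"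
      using sum.remove[OF finV kV(1), of "\<lambda>l. wt G k l * x l"] by simp
    then have "(lam - wt G k k) * x k = 0"
      using xc kV unfolding char_mult_def by (simp add: algebra_simps)
    moreover have "wt G k k \<noteq> lam"
      using st kV unfolding structural_set_def by blast
    ultimately show False
      using kV by simp
  qed
  obtain f where f: "\<And>k. k \<in> N \<Longrightarrow> f k \<in> N \<and> (k \<noteq> f k \<and> wt G k (f k) \<noteq> 0)"
    using succ by metis
  have "finite N" "a \<in> N"
    using finV a unfolding N_def by auto
  then obtain c where c: "length c \<ge> 2" "hd c = last c" "distinct (butlast c)" "set c \<subseteq> N"
    "\<And>m. Suc m < length c \<Longrightarrow> c ! m \<noteq> c ! Suc m \<and> wt G (c ! m) (c ! Suc m) \<noteq> 0"
    using finite_successor_cycle[where R = "\<lambda>k l. k \<noteq> l \<and> wt G k l \<noteq> 0", OF _ _ f] by blast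
  have "set c \<subseteq> verts G - S"
    using c(4) unfolding N_def by auto
  from structural_set_no_cycle_outside[OF st this c(1,2,3,5)] show False .
qed

lemma edges_along_Nil [simp]: "edges_along G []"
  by (simp add: edges_along_def)

lemma edges_along_Cons:
  "edges_along G (a # p) \<longleftrightarrow> a \<in> verts G \<and> (p \<noteq> [] \<longrightarrow> wt G a (hd p) \<noteq> 0) \<and> edges_along G p"
  unfolding edges_along_def
  by (cases p) (auto simp: nth_Cons split: nat.splits)

lemma edges_along_take: "edges_along G p \<Longrightarrow> edges_along G (take n p)"
  unfolding edges_along_def by (auto dest: in_set_takeD)

lemma interior_Cons: "p \<noteq> [] \<Longrightarrow> interior (a # p) = set (butlast p)"
  by (simp add: interior_def)

lemma set_butlast_eq_insert_hd_interior:
  "length p \<ge> 2 \<Longrightarrow> set (butlast p) = insert (hd p) (interior p)"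
  by (cases p) (auto simp: interior_def)

definition exit_paths :: "'v graph \<Rightarrow> 'v set \<Rightarrow> 'v \<Rightarrow> 'v \<Rightarrow> 'v list set" where
  "exit_paths G S j k = {p. is_path G p \<and> hd p = k \<and> last p = j \<and> interior p \<inter> S = {}}"

definition path_factor :: "'v graph \<Rightarrow> 'v list \<Rightarrow> W" where
  "path_factor G p = (\<Prod>m<length p - 1. wt G (p ! m) (p ! Suc m) / (lam - wt G (p ! m) (p ! m)))"

definition exit_weight :: "'v graph \<Rightarrow> 'v set \<Rightarrow> 'v \<Rightarrow> 'v \<Rightarrow> W" where
  "exit_weight G S j k = (\<Sum>p\<in>exit_paths G S j k. path_factor G p)"

lemma path_factor_singleton [simp]: "path_factor G [j] = 1"
  by (simp add: path_factor_def)

lemma path_factor_Cons: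
  "p \<noteq> [] \<Longrightarrow> path_factor G (k # p) = wt G k (hd p) / (lam - wt G k k) * path_factor G p"
  unfolding path_factor_def
  by (cases p) (simp_all add: prod.lessThan_Suc_shift del: prod.lessThan_Suc)

lemma path_weight_Cons:
  assumes "p \<noteq> []"
  shows "path_weight G (i # p) = wt G i (hd p) * path_factor G p"
proof -
  obtain n where n: "length p = Suc n"
    using assms by (cases p) auto
  have "path_weight G (i # p) = wt G i (p ! 0) * (\<Prod>k\<in>{Suc 0..<Suc n}.
        wt G ((i # p) ! k) ((i # p) ! Suc k) / (lam - wt G ((i # p) ! k) ((i # p) ! k)))"
    unfolding path_weight_def using n by simp
  also have "\<dots> = wt G i (p ! 0) * path_factor G p"
    unfolding path_factor_def n
    by (subst prod.atLeast_Suc_lessThan_Suc_shift) (simp add: atLeast0LessThan)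
  finally show ?thesis
    using assms by (simp add: hd_conv_nth)
qed

lemma finite_exit_paths: "finite (verts G) \<Longrightarrow> finite (exit_paths G S j k)"
  by (rule finite_subset[OF _ finite_subset_distinct[of "verts G"]])
     (auto simp: exit_paths_def is_path_def edges_along_def)

lemma exit_pathsD:
  assumes "q \<in> exit_paths G S j l"
  shows "length q \<ge> 2" "distinct q" "edges_along G q" "hd q = l" "last q = j"
    "interior q \<inter> S = {}" "set q \<subseteq> verts G" "q \<noteq> []"
  using assms unfolding exit_paths_def is_path_def edges_along_def by auto

lemma exit_path_butlast_outside:
  assumes "q \<in> exit_paths G S j l" "l \<notin> S"
  shows "set (butlast q) \<subseteq> verts G - S"
proof -
  have "set (butlast q) = insert l (interior q)"
    using exit_pathsD[OF assms(1)] set_butlast_eq_insert_hd_interior by metis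
  moreover have "set (butlast q) \<subseteq> verts G"
    using exit_pathsD(7)[OF assms(1)] by (meson in_set_butlastD subset_iff)
  ultimately show ?thesis
    using exit_pathsD(6)[OF assms(1)] assms(2) by auto
qed

lemma structural_set_no_path_back:
  assumes st: "structural_set G S"
    and p: "distinct p" "p \<noteq> []" "set p \<subseteq> verts G - S" "edges_along G p"
    and closing: "last p \<noteq> hd p" "wt G (last p) (hd p) \<noteq> 0"
  shows False
proof (rule structural_set_no_cycle_outside[OF st, of "last p # p"])
  have "last p \<notin> set (butlast p)"
    using p(1,2) by (metis append_butlast_last_id distinct_append disjoint_iff list.set_intros(1))
  then show "distinct (butlast (last p # p))"
    using p(1,2) by (simp add: distinct_butlast)
  show "(last p # p) ! m \<noteq> (last p # p) ! Suc m \<and> wt G ((last p # p) ! m) ((last p # p) ! Suc m) \<noteq> 0"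
    if "Suc m < length (last p # p)" for m
  proof (cases m)
    case 0
    then show ?thesis using closing p(2) by (simp add: hd_conv_nth)
  next
    case (Suc m')
    then show ?thesis
      using that p(1,4) by (auto simp: edges_along_def nth_eq_iff_index_eq)
  qed
qed (use p last_in_set in \<open>auto simp: Suc_le_eq\<close>)

lemma exit_path_avoids_predecessor:
  assumes st: "structural_set G S" and k: "k \<in> verts G - S" and j: "j \<in> S"
    and l: "l \<notin> S" "l \<noteq> k" "wt G k l \<noteq> 0" and q: "q \<in> exit_paths G S j l"
  shows "k \<notin> set q"
proof
  assume "k \<in> set q"
  then obtain m where m: "m < length q" "q ! m = k"
    by (auto simp: in_set_conv_nth)
  note qD = exit_pathsD[OF q]
  have "q \<noteq> []"
    using qD(1) by auto
  then have "q ! (length q - 1) = j"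
    using qD(5) last_conv_nth[of q] by simp
  then have "m \<noteq> length q - 1"
    using m j k by auto
  then have m1: "Suc m < length q"
    using m by linarith
  show False
  proof (rule structural_set_no_path_back[OF st, of "take (Suc m) q"])
    have "take (Suc m) q = take (Suc m) (butlast q)"
      using m1 by (simp add: take_butlast)
    then have "set (take (Suc m) q) \<subseteq> set (butlast q)"
      by (metis set_take_subset)
    then show "set (take (Suc m) q) \<subseteq> verts G - S"
      using exit_path_butlast_outside[OF q l(1)] by blast
    have "last (take (Suc m) q) = k"
      using m by (simp add: take_Suc_conv_app_nth)
    moreover have "hd (take (Suc m) q) = l"
      using qD(4) by (cases q) auto
    ultimately
    show "last (take (Suc m) q) \<noteq> hd (take (Suc m) q)"
      "wt G (last (take (Suc m) q)) (hd (take (Suc m) q)) \<noteq> 0"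
      using l by simp_all
    show "distinct (take (Suc m) q)" "take (Suc m) q \<noteq> []" "edges_along G (take (Suc m) q)"
      using m qD(2) edges_along_take[OF qD(3)] by auto
  qed
qed

lemma Cons_mem_exit_paths:
  assumes "length q \<ge> 2"
  shows "k # q \<in> exit_paths G S j k' \<longleftrightarrow>
     k = k' \<and> k \<in> verts G \<and> k \<notin> set q \<and> hd q \<notin> S \<and> wt G k (hd q) \<noteq> 0 \<and>
     q \<in> exit_paths G S j (hd q)"
proof -
  have "q \<noteq> []" using assms by auto
  then have "interior (k # q) = insert (hd q) (interior q)"
    using interior_Cons[of q k] set_butlast_eq_insert_hd_interior[OF assms] by simp
  with assms \<open>q \<noteq> []\<close> show ?thesis
    unfolding exit_paths_def by (auto simp: is_path_def edges_along_Cons)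
qed

lemma pair_mem_exit_paths:
  "[k, x] \<in> exit_paths G S j k' \<longleftrightarrow>
     k = k' \<and> x = j \<and> k \<noteq> j \<and> k \<in> verts G \<and> j \<in> verts G \<and> wt G k j \<noteq> 0"
  by (auto simp: exit_paths_def is_path_def edges_along_Cons interior_def)

lemma Cons_mem_branches:
  assumes "length q \<ge> 2"
  shows "i # q \<in> branches G S i' j \<longleftrightarrow>
     i = i' \<and> i \<in> verts G \<and> i \<notin> set (butlast q) \<and> hd q \<notin> S \<and> wt G i (hd q) \<noteq> 0 \<and>
     q \<in> exit_paths G S j (hd q)"
proof -
  have "q \<noteq> []"
    using assms by auto
  then obtain xs y where q: "q = xs @ [y]"
    by (cases q rule: rev_cases) auto
  have "interior (i # q) = insert (hd q) (interior q)"
    using interior_Cons[OF \<open>q \<noteq> []\<close>] set_butlast_eq_insert_hd_interior[OF assms] by simp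
  moreover have "is_path G (i # q) \<or> is_cycle G (i # q) \<longleftrightarrow>
      i \<in> verts G \<and> i \<notin> set (butlast q) \<and> distinct q \<and> wt G i (hd q) \<noteq> 0 \<and> edges_along G q"
    using \<open>q \<noteq> []\<close> unfolding is_path_def is_cycle_def q
    by (cases "i = y") (auto simp: edges_along_Cons butlast_append)
  ultimately show ?thesis
    using assms unfolding branches_def exit_paths_def by (auto simp: is_path_def)
qed

lemma pair_mem_branches:
  "[i, x] \<in> branches G S i' j \<longleftrightarrow>
     i = i' \<and> x = j \<and> i \<in> verts G \<and> j \<in> verts G \<and> wt G i j \<noteq> 0"
  by (cases "i = x") (auto simp: branches_def is_path_def is_cycle_def edges_along_Cons interior_def)

lemma list_cases_length_2:
  obtains "length p < 2" | a x where "p = [a, x]" | a q where "p = a # q" "length q \<ge> 2"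
proof (cases "length p < 2")
  case False
  then obtain a q where "p = a # q"
    by (cases p) auto
  then show ?thesis
    using that False by (cases q; cases "tl q") auto
qed

lemma exit_paths_first_step:
  assumes st: "structural_set G S" and k: "k \<in> verts G - S" and j: "j \<in> S"
  shows "exit_paths G S j k = (if wt G k j \<noteq> 0 then {[k, j]} else {}) \<union>
     (\<Union>l\<in>{l \<in> verts G - S. l \<noteq> k \<and> wt G k l \<noteq> 0}. (#) k ` exit_paths G S j l)"
proof (intro set_eqI)
  fix p
  have jV: "j \<in> verts G"
    using st j structural_set_subset by blast
  show "p \<in> exit_paths G S j k \<longleftrightarrow> p \<in> (if wt G k j \<noteq> 0 then {[k, j]} else {}) \<union>
     (\<Union>l\<in>{l \<in> verts G - S. l \<noteq> k \<and> wt G k l \<noteq> 0}. (#) k ` exit_paths G S j l)"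
  proof (cases p rule: list_cases_length_2)
    case 1
    then show ?thesis
      by (auto dest: exit_pathsD(1))
  next
    case (2 a x)
    then show ?thesis
      using k j jV by (auto simp: pair_mem_exit_paths dest: exit_pathsD(1))
  next
    case (3 a q)
    have "hd q \<in> verts G" if "q \<in> exit_paths G S j l" for l
      using exit_pathsD(1,7)[OF that] by (cases q) auto
    moreover have "hd q \<in> set q"
      using 3 by (cases q) auto
    ultimately have "p \<in> exit_paths G S j k \<longleftrightarrow>
        a = k \<and> (\<exists>l\<in>verts G - S. l \<noteq> k \<and> wt G k l \<noteq> 0 \<and> q \<in> exit_paths G S j l)"
      using 3 k exit_path_avoids_predecessor[OF st k j]
      by (auto simp: Cons_mem_exit_paths dest: exit_pathsD(4) intro!: bexI[of _ "hd q"])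
    then show ?thesis
      using 3 by auto
  qed
qed

lemma branches_first_step:
  assumes st: "structural_set G S" and i: "i \<in> S" and j: "j \<in> S"
  shows "branches G S i j = (if wt G i j \<noteq> 0 then {[i, j]} else {}) \<union>
     (\<Union>k\<in>{k \<in> verts G - S. wt G i k \<noteq> 0}. (#) i ` exit_paths G S j k)"
proof (intro set_eqI)
  fix p
  have SV: "S \<subseteq> verts G"
    using st structural_set_subset by blast
  show "p \<in> branches G S i j \<longleftrightarrow> p \<in> (if wt G i j \<noteq> 0 then {[i, j]} else {}) \<union>
     (\<Union>k\<in>{k \<in> verts G - S. wt G i k \<noteq> 0}. (#) i ` exit_paths G S j k)"
  proof (cases p rule: list_cases_length_2)
    case 1
    then show ?thesis
      by (auto simp: branches_def is_path_def is_cycle_def dest: exit_pathsD(1))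
  next
    case (2 a x)
    then show ?thesis
      using i j SV by (auto simp: pair_mem_branches dest: exit_pathsD(1))
  next
    case (3 a q)
    have "hd q \<in> verts G" if "q \<in> exit_paths G S j l" for l
      using exit_pathsD(1,7)[OF that] by (cases q) auto
    moreover have "i \<notin> set (butlast q)" if "q \<in> exit_paths G S j l" "l \<notin> S" for l
      using exit_path_butlast_outside[OF that] i by blast
    ultimately have "p \<in> branches G S i j \<longleftrightarrow>
        a = i \<and> (\<exists>k\<in>verts G - S. wt G i k \<noteq> 0 \<and> q \<in> exit_paths G S j k)"
      using 3 i SV by (auto simp: Cons_mem_branches dest: exit_pathsD(4))
    then show ?thesis
      using 3 by auto
  qed
qed

subsection \<open>A single reduction is a Schur complement\<close>

lemma sum_first_step:
  assumes finV: "finite (verts G)" and L: "L \<subseteq> verts G"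
    and f: "\<And>l q. l \<in> L \<Longrightarrow> q \<in> exit_paths G S j l \<Longrightarrow> f (a # q) = c l * path_factor G q"
  shows "sum f ((if wt G a j \<noteq> 0 then {[a, j]} else {}) \<union> (\<Union>l\<in>L. (#) a ` exit_paths G S j l)) =
         (if wt G a j \<noteq> 0 then f [a, j] else 0) + (\<Sum>l\<in>L. c l * exit_weight G S j l)"
proof -
  have finL: "finite L"
    using finite_subset[OF L finV] .
  have disj: "(if wt G a j \<noteq> 0 then {[a, j]} else {}) \<inter> (\<Union>l\<in>L. (#) a ` exit_paths G S j l) = {}"
    by (auto dest: exit_pathsD(1))
  have "sum f (\<Union>l\<in>L. (#) a ` exit_paths G S j l) = (\<Sum>l\<in>L. sum f ((#) a ` exit_paths G S j l))"
    using finL finite_exit_paths[OF finV]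
    by (intro sum.UNION_disjoint) (auto dest: exit_pathsD(4))
  also have "\<dots> = (\<Sum>l\<in>L. c l * exit_weight G S j l)"
  proof (rule sum.cong)
    fix l assume l: "l \<in> L"
    have "sum f ((#) a ` exit_paths G S j l) = (\<Sum>q\<in>exit_paths G S j l. f (a # q))"
      by (subst sum.reindex) (auto simp: inj_on_def)
    also have "\<dots> = c l * exit_weight G S j l"
      unfolding exit_weight_def sum_distrib_left using f[OF l] by simp
    finally show "sum f ((#) a ` exit_paths G S j l) = c l * exit_weight G S j l" .
  qed simp
  finally show ?thesis
    using finL finite_exit_paths[OF finV] by (simp add: sum.union_disjoint[OF _ _ disj])
qed

lemma exit_weight_equation:
  assumes st: "structural_set G S" and finV: "finite (verts G)"
    and k: "k \<in> verts G - S" and j: "j \<in> S"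
  shows "(lam - wt G k k) * exit_weight G S j k =
    wt G k j + (\<Sum>l\<in>verts G - S - {k}. wt G k l * exit_weight G S j l)"
proof -
  define d where "d = lam - wt G k k"
  have "wt G k k \<noteq> lam"
    using st k unfolding structural_set_def by blast
  then have "d \<noteq> 0"
    unfolding d_def by simp
  define L where "L = {l \<in> verts G - S. l \<noteq> k \<and> wt G k l \<noteq> 0}"
  have "exit_weight G S j k = sum (path_factor G) (exit_paths G S j k)"
    by (simp add: exit_weight_def)
  also have "\<dots> = (if wt G k j \<noteq> 0 then path_factor G [k, j] else 0) +
      (\<Sum>l\<in>L. wt G k l / d * exit_weight G S j l)"
    unfolding exit_paths_first_step[OF st k j] L_def[symmetric]
    by (rule sum_first_step[OF finV])
       (auto simp: L_def d_def, metis exit_pathsD(4,8) path_factor_Cons times_divide_eq_left)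
  also have "path_factor G [k, j] = wt G k j / d"
    by (simp add: path_factor_Cons d_def)
  also have "(\<Sum>l\<in>L. wt G k l / d * exit_weight G S j l) =
      (\<Sum>l\<in>verts G - S - {k}. wt G k l / d * exit_weight G S j l)"
    using finV by (intro sum.mono_neutral_left) (auto simp: L_def)
  finally have "d * exit_weight G S j k =
      wt G k j + (\<Sum>l\<in>verts G - S - {k}. d * (wt G k l / d * exit_weight G S j l))"
    by (simp add: algebra_simps sum_distrib_left \<open>d \<noteq> 0\<close>)
  then show ?thesis
    using \<open>d \<noteq> 0\<close> unfolding d_def by simp
qed

lemma wt_reduce_exit_weight:
  assumes st: "structural_set G S" and finV: "finite (verts G)" and i: "i \<in> S" and j: "j \<in> S"
  shows "wt (reduce S G) i j = wt G i j + (\<Sum>k\<in>verts G - S. wt G i k * exit_weight G S j k)"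
proof -
  define L where "L = {k \<in> verts G - S. wt G i k \<noteq> 0}"
  have "wt (reduce S G) i j = sum (path_weight G) (branches G S i j)"
    using i j by (simp add: wt_reduce)
  also have "\<dots> =
      (if wt G i j \<noteq> 0 then path_weight G [i, j] else 0) + (\<Sum>k\<in>L. wt G i k * exit_weight G S j k)"
    unfolding branches_first_step[OF st i j] L_def[symmetric]
    by (rule sum_first_step[OF finV]) (auto simp: L_def, metis exit_pathsD(4,8) path_weight_Cons)
  also have "path_weight G [i, j] = wt G i j"
    by (simp add: path_weight_Cons)
  also have "(\<Sum>k\<in>L. wt G i k * exit_weight G S j k) =
      (\<Sum>k\<in>verts G - S. wt G i k * exit_weight G S j k)"
    using finV by (intro sum.mono_neutral_left) (auto simp: L_def)
  finally show ?thesis by simp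
qed

lemma reduce_column_unit_extension:
  assumes st: "structural_set G S" and finV: "finite (verts G)" and j: "j \<in> S"
  defines "g \<equiv> \<lambda>v. if v \<in> S then (if v = j then 1 else 0) else exit_weight G S j v"
  shows "unit_extension G S j g"
    and "\<And>i. i \<in> S \<Longrightarrow> wt (reduce S G) i j = (if i = j then lam else 0) - char_mult G g i"
proof -
  have SV: "S \<subseteq> verts G"
    using structural_set_subset[OF st] .
  have sum_g: "(\<Sum>l\<in>verts G. wt G a l * g l) =
      wt G a j + (\<Sum>l\<in>verts G - S. wt G a l * exit_weight G S j l)" for a
  proof -
    have "(\<Sum>l\<in>S. wt G a l * g l) = (\<Sum>l\<in>S. if l = j then wt G a l else 0)"
      by (rule sum.cong) (simp_all add: g_def)
    then have "(\<Sum>l\<in>S. wt G a l * g l) = wt G a j"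
      using j finite_subset[OF SV finV] by simp
    moreover have "(\<Sum>l\<in>verts G - S. wt G a l * g l) =
        (\<Sum>l\<in>verts G - S. wt G a l * exit_weight G S j l)"
      by (rule sum.cong) (auto simp: g_def)
    ultimately show ?thesis
      using sum.subset_diff[OF SV finV, of "\<lambda>l. wt G a l * g l"] by simp
  qed
  have "char_mult G g k = 0" if k: "k \<in> verts G - S" for k
  proof -
    have "(\<Sum>l\<in>verts G - S. wt G k l * exit_weight G S j l) =
        wt G k k * exit_weight G S j k + (\<Sum>l\<in>verts G - S - {k}. wt G k l * exit_weight G S j l)"
      using k finV by (simp add: sum.remove)
    then show ?thesis
      using exit_weight_equation[OF st finV k j] k
      unfolding char_mult_def sum_g by (simp add: g_def algebra_simps)
  qed
  then show "unit_extension G S j g"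
    unfolding unit_extension_def by (simp add: g_def)
  show "wt (reduce S G) i j = (if i = j then lam else 0) - char_mult G g i" if "i \<in> S" for i
    unfolding wt_reduce_exit_weight[OF st finV that j] char_mult_def sum_g
    using that by (simp add: g_def)
qed

lemma schur_complement_reduce:
  assumes wf: "wf_graph G" and st: "structural_set G S"
  shows "schur_complement G S (reduce S G)"
proof -
  have finV: "finite (verts G)"
    using wf unfolding wf_graph_def by blast
  then have "\<exists>g. unit_extension G S j g \<and>
      (\<forall>i\<in>S. wt (reduce S G) i j = (if i = j then lam else 0) - char_mult G g i)"
    if "j \<in> S" for j
    using reduce_column_unit_extension[OF st finV that] by blast
  then show ?thesis
    unfolding schur_complement_def
    using structural_set_subset[OF st] finV structural_set_nonsingular_off[OF wf st]
    by (auto simp: wt_reduce)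
qed

lemma red_seq_schur_complement:
  "wf_graph G \<Longrightarrow> Ss \<noteq> [] \<Longrightarrow> red_seq G Ss = Some H \<Longrightarrow> schur_complement G (last Ss) H"
proof (induction Ss arbitrary: G)
  case Nil
  then show ?case by simp
next
  case (Cons S Ss)
  have st: "structural_set G S" and red: "red_seq (reduce S G) Ss = Some H"
    using Cons.prems(3) by (simp_all split: if_splits)
  have schur_S: "schur_complement G S (reduce S G)"
    using schur_complement_reduce[OF Cons.prems(1) st] .
  show ?case
  proof (cases "Ss = []")
    case True
    then show ?thesis using red schur_S by simp
  next
    case False
    have "finite S"
      using schur_S finite_subset unfolding schur_complement_def by blast
    then have "schur_complement (reduce S G) (last Ss) H"
      using Cons.IH[OF wf_graph_reduce False red] by simp
    then show ?thesis
      using schur_complement_trans[OF schur_S] False by simp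
  qed
qed

subsection \<open>Existence of a sequence of reductions\<close>

lemma proper_path_weight:
  assumes pi: "in_G_pi G" and b: "length b \<ge> 2" "set b \<subseteq> verts G"
  shows "proper (path_weight G b)"
proof -
  have bV: "b ! k \<in> verts G" if "k < length b" for k
    using that b(2) nth_mem by blast
  show ?thesis
    unfolding path_weight_def
  proof (intro proper_mult proper_prod)
    have "0 < length b" "1 < length b"
      using b(1) by linarith+
    then show "proper (wt G (b ! 0) (b ! 1))"
      using bV proper_wt[OF pi] by blast
    fix k assume "k \<in> {1..<length b - 1}"
    then show "proper (wt G (b ! k) (b ! Suc k) / (lam - wt G (b ! k) (b ! k)))"
      using bV by (intro proper_divide_lam_minus proper_wt[OF pi]) auto
  qed
qed

lemma in_G_pi_reduce:
  assumes pi: "in_G_pi G" shows "in_G_pi (reduce S G)"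
proof -
  have "proper (path_weight G b)" if "b \<in> branches G S i j" for i j b
    using that proper_path_weight[OF pi]
    unfolding branches_def is_path_def is_cycle_def edges_along_def by auto
  then have "proper (wt (reduce S G) i j)" for i j
    unfolding wt_reduce by (auto intro: proper_sum proper_0)
  then show ?thesis
    unfolding in_G_pi_def using pi_deg_le_0_iff_proper by blast
qed

lemma structural_set_subsingleton_complement:
  assumes pi: "in_G_pi G" and S: "S \<noteq> {}" "S \<subseteq> verts G"
    and single: "\<And>a b. a \<in> verts G - S \<Longrightarrow> b \<in> verts G - S \<Longrightarrow> a = b"
  shows "structural_set G S"
proof -
  have "\<not> is_cycle (induced (loopless G) (verts G - S)) c" for c
  proof
    assume "is_cycle (induced (loopless G) (verts G - S)) c"
    then have c: "length c \<ge> 2" "edges_along (induced (loopless G) (verts G - S)) c"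
      unfolding is_cycle_def by auto
    then have "set c \<subseteq> verts G - S"
      unfolding edges_along_def by auto
    moreover have "0 < length c" "1 < length c"
      using c(1) by linarith+
    ultimately have "c ! 0 \<in> verts G - S" "c ! 1 \<in> verts G - S"
      using nth_mem by blast+
    then have "c ! 0 = c ! 1"
      using single by blast
    moreover have "wt (induced (loopless G) (verts G - S)) (c ! 0) (c ! Suc 0) \<noteq> 0"
      using c unfolding edges_along_def by auto
    ultimately show False
      by (simp split: if_splits)
  qed
  moreover have "wt G i i \<noteq> lam" if "i \<in> verts G - S" for i
    using that proper_neq_lam proper_wt[OF pi] by blast
  ultimately show ?thesis
    unfolding structural_set_def using S by blast
qed

lemma is_red_seq_Cons:
  assumes st: "structural_set G S" and Ss: "is_red_seq (reduce S G) Ss U"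
  shows "is_red_seq G (S # Ss) U"
proof -
  obtain S1 Ss' where Ss_eq: "Ss = S1 # Ss'"
    using Ss unfolding is_red_seq_def by (cases Ss) auto
  then have "structural_set (reduce S G) S1"
    using Ss unfolding is_red_seq_def by (auto split: if_splits)
  then have "S1 \<subseteq> S"
    using structural_set_subset by fastforce
  then have "Suc k < length (S # Ss) \<Longrightarrow> (S # Ss) ! Suc k \<subseteq> (S # Ss) ! k" for k
    using Ss Ss_eq unfolding is_red_seq_def by (cases k) auto
  then show ?thesis
    using st Ss Ss_eq unfolding is_red_seq_def by auto
qed

lemma red_seq_exists:
  "card (verts G - U) = n \<Longrightarrow> wf_graph G \<Longrightarrow> in_G_pi G \<Longrightarrow> U \<noteq> {} \<Longrightarrow> U \<subseteq> verts G \<Longrightarrow>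
   \<exists>Ss. is_red_seq G Ss U"
proof (induction n arbitrary: G)
  case 0
  have "finite (verts G)"
    using "0.prems"(2) unfolding wf_graph_def by blast
  then have "verts G - U = {}"
    using "0.prems"(1) by simp
  then have "structural_set G U"
    by (intro structural_set_subsingleton_complement[OF "0.prems"(3,4,5)]) auto
  then have "is_red_seq G [U] U"
    unfolding is_red_seq_def by simp
  then show ?case by blast
next
  case (Suc n)
  have finV: "finite (verts G)"
    using Suc.prems(2) unfolding wf_graph_def by blast
  obtain v where v: "v \<in> verts G - U"
    using Suc.prems(1) by (metis card.empty ex_in_conv nat.distinct(1))
  define S where "S = verts G - {v}"
  have US: "U \<subseteq> S"
    using Suc.prems(5) v unfolding S_def by auto
  have st: "structural_set G S"
    using Suc.prems(4) US unfolding S_def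
    by (intro structural_set_subsingleton_complement[OF Suc.prems(3)]) auto
  have finS: "finite S"
    using finV unfolding S_def by simp
  have "verts G - U = insert v (S - U)" "v \<notin> S - U"
    using v unfolding S_def by auto
  then have "card (verts (reduce S G) - U) = n"
    using Suc.prems(1) finS by simp
  moreover have "U \<subseteq> verts (reduce S G)"
    using US by simp
  ultimately obtain Ss where "is_red_seq (reduce S G) Ss U"
    using Suc.IH[OF _ wf_graph_reduce[OF finS] in_G_pi_reduce[OF Suc.prems(3)] Suc.prems(4)]
    by blast
  then show ?case
    using is_red_seq_Cons[OF st] by blast
qed

theorem theorem3:
  fixes G :: "'v graph" and U :: "'v set"
  assumes "wf_graph G" and "in_G_pi G"
    and "U \<noteq> {}" and "U \<subseteq> verts G"
  shows "(\<exists>Ss. is_red_seq G Ss U) \<and>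
         (\<exists>H. verts H = U \<and>
            (\<forall>Ss. is_red_seq G Ss U \<longrightarrow> red_seq G Ss = Some H))"
proof -
  have schur: "schur_complement G U H" if "is_red_seq G Ss U" "red_seq G Ss = Some H" for Ss H
    using red_seq_schur_complement[OF assms(1) _ that(2)] that(1) unfolding is_red_seq_def by auto
  obtain Ss0 where Ss0: "is_red_seq G Ss0 U"
    using red_seq_exists[OF refl assms] by blast
  then obtain H0 where H0: "red_seq G Ss0 = Some H0"
    unfolding is_red_seq_def by blast
  have "red_seq G Ss = Some H0" if Ss: "is_red_seq G Ss U" for Ss
  proof -
    obtain H where H: "red_seq G Ss = Some H"
      using Ss unfolding is_red_seq_def by blast
    then show ?thesis
      using schur_complement_unique schur[OF Ss H] schur[OF Ss0 H0] by metis
  qed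
  moreover have "verts H0 = U"
    using schur[OF Ss0 H0] unfolding schur_complement_def by blast
  ultimately show ?thesis
    using Ss0 by blast
qed

end
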